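(* Let $\mathcal{G}$ be a fractionally $\mathrm{tree}\text{-}\alpha$-fragile class of graphs and let $c\in\mathbb{N}$ be arbitrary. Then there exists $k\in\mathbb{N}$ such that every $G\in\mathcal{G}$ with $|V(G)|\ge k$ satisfies $s\text{-}\alpha(G)<|V(G)|/c$. In particular, every fractionally $\mathrm{tree}\text{-}\alpha$-fragile class has separators of sublinear independence number.
   Context: $\alpha$ denotes independence number. The tree-independence number $\mathrm{tree}\text{-}\alpha(G)$ is the minimum over tree decompositions $(T,\{X_t\})$ of $G$ (tree $T$, bags covering vertices and edges, each vertex's bags forming a subtree) of $\max_t\alpha(G[X_t])$. For $\beta\le1$, a $\beta$-general cover of $G$ is a multiset $\mathcal{C}$ of subsets of $V(G)$ with each vertex in at least $\beta|\mathcal{C}|$ members. A class $\mathcal{G}$ is fractionally $\mathrm{tree}\text{-}\alpha$-fragile if there is $f\colon\mathbb{N}\to\mathbb{N}$ such that for every $r\in\mathbb{N}$ every $G\in\mathcal{G}$ has a $(1-1/r)$-general cover $\mathcal{C}$ with $\mathrm{tree}\text{-}\alpha(G[C])\le f(r)$ for all $C\in\mathcal{C}$. A separation of $G$ is a pair $(A,B)$ of vertex sets with $A\cup B=V(G)$ and no edge between $A\setminus B$ and $B\setminus A$; it is balanced if $|A\setminus B|,|B\setminus A|\le 2|V(G)|/3$; its independence number is $\alpha(G[A\cap B])$. $s\text{-}\alpha(G)$ is the minimum independence number of a balanced separation of $G$. For a class $\mathcal{G}$, $s\text{-}\alpha_{\mathcal{G}}(n)=\max\{s\text{-}\alpha(G):G\in\mathcal{G},|V(G)|\le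 n\}$, and $\mathcal{G}$ has separators of sublinear independence number if $s\text{-}\alpha_{\mathcal{G}}(n)/n\to0$. *)

theory Defs
  imports Complex_Main "HOL-Library.Multiset"
begin

type_synonym 'a graph = "'a set \<times> ('a \<times> 'a) set"

definition verts :: "'a graph \<Rightarrow> 'a set" where "verts G = fst G"
definition edges :: "'a graph \<Rightarrow> ('a \<times> 'a) set" where "edges G = snd G"

definition is_graph :: "'a graph \<Rightarrow> bool" where
  "is_graph G \<longleftrightarrow> finite (verts G) \<and> edges G \<subseteq> verts G \<times> verts G
     \<and> sym (edges G) \<and> irrefl (edges G)"

definition induced :: "'a graph \<Rightarrow> 'a set \<Rightarrow> 'a graph" where
  "induced G S = (verts G \<inter> S, edges G \<inter> (S \<times> S))"

definition independent :: "'a graph \<Rightarrow> 'a set \<Rightarrow> bool" where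
  "independent G A \<longleftrightarrow> A \<subseteq> verts G \<and> (\<forall>u\<in>A. \<forall>v\<in>A. (u, v) \<notin> edges G)"

definition alpha :: "'a graph \<Rightarrow> nat" where
  "alpha G = Max {card A | A. independent G A}"

definition connected_on :: "nat set \<Rightarrow> (nat \<times> nat) set \<Rightarrow> bool" where
  "connected_on I F \<longleftrightarrow> (\<forall>s\<in>I. \<forall>t\<in>I. (s, t) \<in> (F \<inter> (I \<times> I))\<^sup>*)"

definition is_tree :: "nat set \<Rightarrow> (nat \<times> nat) set \<Rightarrow> bool" where
  "is_tree I F \<longleftrightarrow> finite I \<and> I \<noteq> {} \<and> F \<subseteq> I \<times> I \<and> sym F \<and> irrefl F
     \<and> connected_on I F \<and> card {{s, t} | s t. (s, t) \<in> F} = card I - 1"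

definition tree_decomp :: "'a graph \<Rightarrow> nat set \<Rightarrow> (nat \<times> nat) set \<Rightarrow> (nat \<Rightarrow> 'a set) \<Rightarrow> bool" where
  "tree_decomp G I F X \<longleftrightarrow> is_tree I F
     \<and> (\<forall>t\<in>I. X t \<subseteq> verts G)
     \<and> (\<forall>v\<in>verts G. \<exists>t\<in>I. v \<in> X t)
     \<and> (\<forall>(u, v)\<in>edges G. \<exists>t\<in>I. u \<in> X t \<and> v \<in> X t)
     \<and> (\<forall>v\<in>verts G. connected_on {t\<in>I. v \<in> X t} F)"

definition tree_alpha :: "'a graph \<Rightarrow> nat" where
  "tree_alpha G = Inf {Max ((\<lambda>t. alpha (induced G (X t))) ` I) | I F X. tree_decomp G I F X}"

definition general_cover :: "'a graph \<Rightarrow> real \<Rightarrow> 'a set multiset \<Rightarrow> bool" where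
  "general_cover G \<beta> \<C> \<longleftrightarrow> \<C> \<noteq> {#} \<and> (\<forall>C\<in>#\<C>. C \<subseteq> verts G)
     \<and> (\<forall>v\<in>verts G. real (size (filter_mset (\<lambda>C. v \<in> C) \<C>)) \<ge> \<beta> * real (size \<C>))"

definition frac_tree_alpha_fragile :: "'a graph set \<Rightarrow> bool" where
  "frac_tree_alpha_fragile \<G> \<longleftrightarrow> (\<exists>f :: nat \<Rightarrow> nat. \<forall>r::nat. r \<ge> 1 \<longrightarrow>
     (\<forall>G\<in>\<G>. \<exists>\<C>. general_cover G (1 - 1 / real r) \<C>
        \<and> (\<forall>C\<in>#\<C>. tree_alpha (induced G C) \<le> f r)))"

definition separation :: "'a graph \<Rightarrow> 'a set \<Rightarrow> 'a set \<Rightarrow> bool" where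
  "separation G A B \<longleftrightarrow> A \<union> B = verts G
     \<and> (\<forall>u\<in>A - B. \<forall>v\<in>B - A. (u, v) \<notin> edges G)"

definition balanced_separation :: "'a graph \<Rightarrow> 'a set \<Rightarrow> 'a set \<Rightarrow> bool" where
  "balanced_separation G A B \<longleftrightarrow> separation G A B
     \<and> real (card (A - B)) \<le> 2 * real (card (verts G)) / 3
     \<and> real (card (B - A)) \<le> 2 * real (card (verts G)) / 3"

definition s_alpha :: "'a graph \<Rightarrow> nat" where
  "s_alpha G = Inf {alpha (induced G (A \<inter> B)) | A B. balanced_separation G A B}"

definition s_alpha_class :: "'a graph set \<Rightarrow> nat \<Rightarrow> nat" where
  "s_alpha_class \<G> n = Sup {s_alpha G | G. G \<in> \<G> \<and> card (verts G) \<le> n}"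

definition sublinear_sep_alpha :: "'a graph set \<Rightarrow> bool" where
  "sublinear_sep_alpha \<G> \<longleftrightarrow> ((\<lambda>n. real (s_alpha_class \<G> n) / real n) \<longlonglongrightarrow> 0)"

end

theory Submission
  imports Defs
begin

text \<open>By averaging, some member C of a (1 - 1/r)-general cover contains all but at most n/r
  vertices, and G[C] has a tree decomposition whose bags have independence number at most f(r).
  Some bag of a tree decomposition is the separator of a balanced separation: otherwise every bag
  misses a connected set of more than 2n/3 vertices; any two such sets meet, so the subtrees of
  bags meeting them pairwise intersect, and by the Helly property of subtrees some node lies in
  all of them, including the one of its own set. Adding the vertices outside C to both sides
  yields a balanced separation of G with separator independence number at most f(r) + n/r, and
  r = 2c gives s-alpha(G) < n/c as soon as n > r f(r).\<close>

section \<open>Subtrees of a tree\<close>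

lemma rtrancl_avoid_leaf:
  assumes "(s, x) \<in> R\<^sup>*" and "s \<noteq> l" "p \<noteq> l"
    and leaf_out: "\<And>x. (l, x) \<in> R \<Longrightarrow> x = p" and leaf_in: "\<And>x. (x, l) \<in> R \<Longrightarrow> x = p"
  shows "(s, if x = l then p else x) \<in> (R \<inter> (- {l}) \<times> (- {l}))\<^sup>*"
  using \<open>(s, x) \<in> R\<^sup>*\<close>
proof (induction x rule: rtrancl_induct)
  case base
  show ?case using \<open>s \<noteq> l\<close> by simp
next
  case (step y z)
  show ?case
  proof (cases "y = l")
    case True
    then show ?thesis using leaf_out step \<open>p \<noteq> l\<close> by auto
  next
    case y: False
    show ?thesis
    proof (cases "z = l")
      case True
      then show ?thesis using leaf_in step y by auto
    next
      case False
      then have "(y, z) \<in> R \<inter> (- {l}) \<times> (- {l})" using step.hyps(2) y by simp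
      with step.IH y False show ?thesis by (simp add: rtrancl_into_rtrancl)
    qed
  qed
qed

lemma card_sym_irrefl_eq_twice:
  assumes "finite F" "sym F" "irrefl F"
  shows "card F = 2 * card {{s, t} | s t. (s, t) \<in> F}"
proof -
  let ?D = "{{s, t} | s t. (s, t) \<in> F}"
  let ?fibre = "\<lambda>d. {(s, t). (s, t) \<in> F \<and> {s, t} = d}"
  have "?D = (\<lambda>(s, t). {s, t}) ` F" by auto
  then have "finite ?D" using assms(1) by simp
  have fibre_card: "card (?fibre d) = 2" if d: "d \<in> ?D" for d
  proof -
    obtain a b where ab: "(a, b) \<in> F" "d = {a, b}" using d by blast
    then have "a \<noteq> b" "(b, a) \<in> F" using assms(2,3) unfolding irrefl_def sym_def by auto
    moreover have "?fibre d = {(a, b), (b, a)}" using ab \<open>(b, a) \<in> F\<close> by (auto simp: doubleton_eq_iff)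
    ultimately show ?thesis by simp
  qed
  have "card F = card (\<Union>d\<in>?D. ?fibre d)" by (rule arg_cong[where f = card]) auto
  also have "\<dots> = (\<Sum>d\<in>?D. card (?fibre d))"
    using \<open>finite ?D\<close> assms(1) by (intro card_UN_disjoint) (auto intro: finite_subset)
  also have "\<dots> = (\<Sum>d\<in>?D. 2)" using fibre_card by simp
  finally show ?thesis by simp
qed

lemma tree_leafD:
  assumes "is_tree I F" "F `` {l} = {p}"
  shows "(l, x) \<in> F \<longleftrightarrow> x = p" "(x, l) \<in> F \<longleftrightarrow> x = p" "p \<noteq> l"
proof -
  have "sym F" "irrefl F" using assms(1) unfolding is_tree_def by auto
  show out: "(l, x) \<in> F \<longleftrightarrow> x = p" for x using assms(2) by auto
  show "(x, l) \<in> F \<longleftrightarrow> x = p" using out \<open>sym F\<close> unfolding sym_def by blast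
  show "p \<noteq> l" using out[of p] \<open>irrefl F\<close> unfolding irrefl_def by auto
qed

lemma tree_has_leaf:
  assumes "is_tree I F" "2 \<le> card I"
  shows "\<exists>l\<in>I. \<exists>p. F `` {l} = {p}"
proof (rule ccontr)
  assume no_leaf: "\<not> ?thesis"
  have fin: "finite I" and FI: "F \<subseteq> I \<times> I" and "sym F" "irrefl F" and con: "connected_on I F"
    and edge_count: "card {{s, t} | s t. (s, t) \<in> F} = card I - 1"
    using assms(1) unfolding is_tree_def by auto
  have nbrs_fin: "finite (F `` {s})" for s using FI fin by (auto intro: finite_subset[of _ I])
  have degree: "2 \<le> card (F `` {s})" if "s \<in> I" for s
  proof -
    have "I - {s} \<noteq> {}" using card_Diff_singleton[OF that] assms(2) by force
    then obtain t where "t \<in> I" "t \<noteq> s" by blast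
    then have "(s, t) \<in> (F \<inter> I \<times> I)\<^sup>+"
      using con that unfolding connected_on_def by (metis rtrancl_eq_or_trancl)
    then have "F `` {s} \<noteq> {}" by (auto dest: tranclD)
    moreover have "\<nexists>p. F `` {s} = {p}" using no_leaf that by blast
    ultimately have "card (F `` {s}) \<noteq> 0" "card (F `` {s}) \<noteq> 1"
      using nbrs_fin by (auto simp: card_1_singleton_iff)
    then show ?thesis by linarith
  qed
  have "F = Sigma I (\<lambda>s. F `` {s})" using FI by auto
  then have "card F = (\<Sum>s\<in>I. card (F `` {s}))"
    using fin nbrs_fin by (metis (no_types, lifting) card_SigmaI sum.cong)
  also have "\<dots> \<ge> (\<Sum>s\<in>I. 2)" using degree by (intro sum_mono) auto
  finally have "2 * card I \<le> card F" by simp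
  moreover have "finite F" using FI fin by (meson finite_SigmaI finite_subset)
  then have "card F = 2 * (card I - 1)"
    using card_sym_irrefl_eq_twice[OF _ \<open>sym F\<close> \<open>irrefl F\<close>] edge_count by simp
  ultimately show False using assms(2) by linarith
qed

lemma connected_on_remove_leaf:
  assumes "is_tree I F" "F `` {l} = {p}" "S \<subseteq> I" "connected_on S F"
  shows "connected_on (S - {l}) (F \<inter> (I - {l}) \<times> (I - {l}))"
  unfolding connected_on_def
proof (intro ballI)
  fix a b assume a: "a \<in> S - {l}" and b: "b \<in> S - {l}"
  have "(a, b) \<in> (F \<inter> S \<times> S)\<^sup>*" using assms(4) a b unfolding connected_on_def by auto
  then have "(a, if b = l then p else b) \<in> (F \<inter> S \<times> S \<inter> (- {l}) \<times> (- {l}))\<^sup>*"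
    by (rule rtrancl_avoid_leaf) (use a tree_leafD[OF assms(1,2)] in auto)
  then have "(a, b) \<in> (F \<inter> S \<times> S \<inter> (- {l}) \<times> (- {l}))\<^sup>*" using b by simp
  moreover have "F \<inter> S \<times> S \<inter> (- {l}) \<times> (- {l}) = F \<inter> (I - {l}) \<times> (I - {l}) \<inter> (S - {l}) \<times> (S - {l})"
    using assms(3) by auto
  ultimately show "(a, b) \<in> (F \<inter> (I - {l}) \<times> (I - {l}) \<inter> (S - {l}) \<times> (S - {l}))\<^sup>*" by simp
qed

lemma undirected_edges_remove_leaf:
  assumes "is_tree I F" "F `` {l} = {p}"
  shows "{{s, t} | s t. (s, t) \<in> F \<inter> (I - {l}) \<times> (I - {l})} = {{s, t} | s t. (s, t) \<in> F} - {{l, p}}"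
proof (intro equalityI subsetI)
  fix d assume "d \<in> {{s, t} | s t. (s, t) \<in> F \<inter> (I - {l}) \<times> (I - {l})}"
  then obtain s t where "(s, t) \<in> F \<inter> (I - {l}) \<times> (I - {l})" "d = {s, t}" by blast
  then show "d \<in> {{s, t} | s t. (s, t) \<in> F} - {{l, p}}" by (auto simp: doubleton_eq_iff)
next
  fix d assume d: "d \<in> {{s, t} | s t. (s, t) \<in> F} - {{l, p}}"
  then obtain s t where st: "(s, t) \<in> F" "d = {s, t}" by blast
  then have "s \<noteq> l" "t \<noteq> l" using d tree_leafD[OF assms] by (auto simp: insert_commute)
  moreover have "F \<subseteq> I \<times> I" using assms(1) unfolding is_tree_def by blast
  ultimately show "d \<in> {{s, t} | s t. (s, t) \<in> F \<inter> (I - {l}) \<times> (I - {l})}" using st by blast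
qed

lemma is_tree_remove_leaf:
  assumes T: "is_tree I F" and "l \<in> I" and leaf: "F `` {l} = {p}" and "2 \<le> card I"
  shows "is_tree (I - {l}) (F \<inter> (I - {l}) \<times> (I - {l}))"
proof -
  have fin: "finite I" and FI: "F \<subseteq> I \<times> I" and "sym F" "irrefl F"
    and con: "connected_on I F" and edge_count: "card {{s, t} | s t. (s, t) \<in> F} = card I - 1"
    using T unfolding is_tree_def by auto
  let ?I = "I - {l}" and ?F = "F \<inter> (I - {l}) \<times> (I - {l})"
  let ?D = "{{s, t} | s t. (s, t) \<in> F}"
  have "?D = (\<lambda>(s, t). {s, t}) ` F" by auto
  moreover have "finite F" using FI fin by (meson finite_SigmaI finite_subset)
  ultimately have "finite ?D" by simp
  moreover have "{l, p} \<in> ?D" using tree_leafD(1)[OF T leaf] by blast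
  ultimately have edge_count': "card {{s, t} | s t. (s, t) \<in> ?F} = card ?I - 1"
    using edge_count \<open>l \<in> I\<close> undirected_edges_remove_leaf[OF T leaf] by simp
  have "?I \<noteq> {}" using card_Diff_singleton[OF \<open>l \<in> I\<close>] \<open>2 \<le> card I\<close> by force
  have "connected_on ?I ?F" using connected_on_remove_leaf[OF T leaf subset_refl con] .
  have "sym ?F" "irrefl ?F" using \<open>sym F\<close> \<open>irrefl F\<close> unfolding sym_def irrefl_def by blast+
  show ?thesis
    unfolding is_tree_def
  proof (intro conjI)
    show "finite ?I" using fin by simp
    show "?F \<subseteq> ?I \<times> ?I" by blast
  qed fact+
qed

lemma leaf_neighbour_mem:
  assumes "is_tree I F" "F `` {l} = {p}" "l \<in> S" "S \<noteq> {l}" "connected_on S F"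
  shows "p \<in> S"
proof -
  obtain b where "b \<in> S" "b \<noteq> l" using assms(3,4) by blast
  then have "(l, b) \<in> (F \<inter> S \<times> S)\<^sup>+"
    using assms(3,5) unfolding connected_on_def by (metis rtrancl_eq_or_trancl)
  then obtain y where "(l, y) \<in> F \<inter> S \<times> S" by (meson tranclD)
  then show ?thesis using tree_leafD(1)[OF assms(1,2)] by auto
qed

lemma subtrees_remove_leaf_meet:
  assumes "is_tree I F" "F `` {l} = {p}"
    and "connected_on S1 F" "S1 \<noteq> {l}" "connected_on S2 F" "S2 \<noteq> {l}" "S1 \<inter> S2 \<noteq> {}"
  shows "(S1 - {l}) \<inter> (S2 - {l}) \<noteq> {}"
proof (cases "l \<in> S1 \<inter> S2")
  case True
  then have "p \<in> S1" "p \<in> S2" using leaf_neighbour_mem[OF assms(1,2)] assms(3-6) by blast+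
  then show ?thesis using tree_leafD(3)[OF assms(1,2)] by blast
qed (use assms(7) in blast)

lemma subtree_helly:
  assumes "is_tree I F"
    and "\<And>j. j \<in> J \<Longrightarrow> S j \<subseteq> I \<and> S j \<noteq> {} \<and> connected_on (S j) F"
    and "\<And>i j. i \<in> J \<Longrightarrow> j \<in> J \<Longrightarrow> S i \<inter> S j \<noteq> {}"
  shows "\<exists>u\<in>I. \<forall>j\<in>J. u \<in> S j"
  using assms
proof (induction "card I" arbitrary: I F S rule: less_induct)
  case less
  have fin: "finite I" and "I \<noteq> {}" using less.prems(1) unfolding is_tree_def by auto
  show ?case
  proof (cases "2 \<le> card I")
    case False
    moreover have "card I \<noteq> 0" using fin \<open>I \<noteq> {}\<close> by simp
    ultimately have "card I = 1" by linarith
    then obtain u where "I = {u}" by (rule card_1_singletonE)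
    then have "u \<in> S j" if "j \<in> J" for j using less.prems(2)[OF that] by auto
    then show ?thesis using \<open>I = {u}\<close> by auto
  next
    case True
    obtain l p where "l \<in> I" and leaf: "F `` {l} = {p}"
      using tree_has_leaf[OF less.prems(1) True] by blast
    show ?thesis
    proof (cases "\<exists>j\<in>J. S j = {l}")
      case True
      then obtain j0 where "j0 \<in> J" "S j0 = {l}" by blast
      then have "l \<in> S j" if "j \<in> J" for j using less.prems(3)[OF that \<open>j0 \<in> J\<close>] by auto
      then show ?thesis using \<open>l \<in> I\<close> by blast
    next
      case False
      let ?I = "I - {l}" and ?F = "F \<inter> (I - {l}) \<times> (I - {l})"
      have subtrees: "S j - {l} \<subseteq> ?I \<and> S j - {l} \<noteq> {} \<and> connected_on (S j - {l}) ?F" if "j \<in> J" for j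
      proof -
        have "S j \<subseteq> I" "S j \<noteq> {}" "connected_on (S j) F" "S j \<noteq> {l}"
          using less.prems(2)[OF that] False that by auto
        then show ?thesis using connected_on_remove_leaf[OF less.prems(1) leaf] by blast
      qed
      have pairwise: "(S i - {l}) \<inter> (S j - {l}) \<noteq> {}" if "i \<in> J" "j \<in> J" for i j
      proof (rule subtrees_remove_leaf_meet[OF less.prems(1) leaf])
        show "connected_on (S i) F" "connected_on (S j) F"
          using less.prems(2)[OF that(1)] less.prems(2)[OF that(2)] by blast+
        show "S i \<noteq> {l}" "S j \<noteq> {l}" using False that by blast+
        show "S i \<inter> S j \<noteq> {}" using less.prems(3)[OF that] .
      qed
      have "card ?I < card I" using \<open>l \<in> I\<close> fin by (rule card_Diff1_less[rotated])
      then obtain u where "u \<in> ?I" "\<forall>j\<in>J. u \<in> S j - {l}"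
        using less.hyps[of ?I ?F "\<lambda>j. S j - {l}", OF _ is_tree_remove_leaf[OF less.prems(1) \<open>l \<in> I\<close> leaf True]]
          subtrees pairwise by blast
      then show ?thesis by auto
    qed
  qed
qed

section \<open>A bag of every tree decomposition is a balanced separator\<close>

definition connected_set :: "'a graph \<Rightarrow> 'a set \<Rightarrow> bool" where
  "connected_set H K \<longleftrightarrow> (\<forall>a\<in>K. \<forall>b\<in>K. (a, b) \<in> (edges H \<inter> K \<times> K)\<^sup>*)"

definition edge_closed :: "'a graph \<Rightarrow> 'a set \<Rightarrow> 'a set \<Rightarrow> bool" where
  "edge_closed H R Y \<longleftrightarrow> Y \<subseteq> R \<and> (\<forall>u\<in>Y. \<forall>v\<in>R - Y. (u, v) \<notin> edges H)"

lemma connected_on_bags_meeting: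
  assumes TD: "tree_decomp H I F X" and "K \<subseteq> verts H" and "connected_set H K"
  shows "connected_on {s\<in>I. X s \<inter> K \<noteq> {}} F"
proof -
  let ?T = "{s\<in>I. X s \<inter> K \<noteq> {}}"
  have edge_bag: "\<forall>(u, v)\<in>edges H. \<exists>t\<in>I. u \<in> X t \<and> v \<in> X t"
    and vertex_subtree: "\<forall>v\<in>verts H. connected_on {t\<in>I. v \<in> X t} F"
    using TD unfolding tree_decomp_def by auto
  have same_vertex: "(t1, t2) \<in> (F \<inter> ?T \<times> ?T)\<^sup>*"
    if "v \<in> K" "t1 \<in> I" "t2 \<in> I" "v \<in> X t1" "v \<in> X t2" for v t1 t2
  proof -
    have "(t1, t2) \<in> (F \<inter> {t\<in>I. v \<in> X t} \<times> {t\<in>I. v \<in> X t})\<^sup>*"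
      using vertex_subtree that \<open>K \<subseteq> verts H\<close> unfolding connected_on_def by blast
    moreover have "F \<inter> {t\<in>I. v \<in> X t} \<times> {t\<in>I. v \<in> X t} \<subseteq> F \<inter> ?T \<times> ?T" using that(1) by blast
    ultimately show ?thesis using rtrancl_mono by blast
  qed
  show ?thesis unfolding connected_on_def
  proof (intro ballI)
    fix t1 t2 assume t1: "t1 \<in> ?T" and t2: "t2 \<in> ?T"
    obtain a where a: "a \<in> X t1" "a \<in> K" using t1 by blast
    obtain b where b: "b \<in> X t2" "b \<in> K" using t2 by blast
    have "(a, b) \<in> (edges H \<inter> K \<times> K)\<^sup>*" using \<open>connected_set H K\<close> a b unfolding connected_set_def by blast
    then have "\<forall>t2\<in>I. b \<in> X t2 \<longrightarrow> (t1, t2) \<in> (F \<inter> ?T \<times> ?T)\<^sup>*"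
    proof (induction b rule: rtrancl_induct)
      case base
      then show ?case using same_vertex a t1 by blast
    next
      case (step c b)
      then obtain t' where t': "t' \<in> I" "c \<in> X t'" "b \<in> X t'" using edge_bag by blast
      have "(t1, t') \<in> (F \<inter> ?T \<times> ?T)\<^sup>*" using step.IH t' by blast
      show ?case
      proof (intro ballI impI)
        fix t2 assume "t2 \<in> I" "b \<in> X t2"
        then have "(t', t2) \<in> (F \<inter> ?T \<times> ?T)\<^sup>*" using same_vertex[of b t' t2] t' step.hyps(2) by blast
        with \<open>(t1, t') \<in> (F \<inter> ?T \<times> ?T)\<^sup>*\<close> show "(t1, t2) \<in> (F \<inter> ?T \<times> ?T)\<^sup>*" by (rule rtrancl_trans)
      qed
    qed
    then show "(t1, t2) \<in> (F \<inter> ?T \<times> ?T)\<^sup>*" using t2 b by blast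
  qed
qed

lemma balanced_separation_of_edge_closed:
  assumes "edge_closed H (verts H - S) Y" "S \<subseteq> verts H"
    and "real (card Y) \<le> 2 * real (card (verts H)) / 3"
    and "real (card (verts H - S - Y)) \<le> 2 * real (card (verts H)) / 3"
  shows "\<exists>A B. balanced_separation H A B \<and> A \<inter> B = S"
proof (intro exI conjI)
  have "Y \<subseteq> verts H - S" using assms(1) unfolding edge_closed_def by auto
  then have "(Y \<union> S) - (verts H - Y) = Y" and "(verts H - Y) - (Y \<union> S) = verts H - S - Y"
    using assms(2) by blast+
  then show "balanced_separation H (Y \<union> S) (verts H - Y)"
    using assms \<open>Y \<subseteq> verts H - S\<close>
    unfolding balanced_separation_def separation_def edge_closed_def by auto
  show "(Y \<union> S) \<inter> (verts H - Y) = S" using \<open>Y \<subseteq> verts H - S\<close> assms(2) by blast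
qed

lemma balanced_separation_of_edge_closed_middle:
  assumes "edge_closed H (verts H - S) Y" "S \<subseteq> verts H" "finite (verts H)"
    and "real (card (verts H)) / 3 \<le> real (card Y)" "real (card Y) \<le> 2 * real (card (verts H)) / 3"
  shows "\<exists>A B. balanced_separation H A B \<and> A \<inter> B = S"
proof (rule balanced_separation_of_edge_closed[OF assms(1,2,5)])
  have "Y \<subseteq> verts H" using assms(1) unfolding edge_closed_def by auto
  have "card (verts H - S - Y) + card Y = card ((verts H - S - Y) \<union> Y)"
    using assms(3) \<open>Y \<subseteq> verts H\<close> by (intro card_Un_disjoint[symmetric]) (auto intro: finite_subset)
  also have "\<dots> \<le> card (verts H)" using assms(3) \<open>Y \<subseteq> verts H\<close> by (intro card_mono) auto
  finally have "real (card (verts H - S - Y)) + real (card Y) \<le> real (card (verts H))"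
    by (metis of_nat_add of_nat_mono)
  then show "real (card (verts H - S - Y)) \<le> 2 * real (card (verts H)) / 3"
    using assms(4) by linarith
qed

lemma obtain_component:
  assumes "sym (edges H)" "x \<in> R"
  obtains K where "x \<in> K" "edge_closed H R K" "connected_set H K"
proof
  let ?E = "edges H \<inter> R \<times> R"
  define K where "K = {y \<in> R. (x, y) \<in> ?E\<^sup>*}"
  show "x \<in> K" using assms(2) unfolding K_def by simp
  show "edge_closed H R K"
    unfolding edge_closed_def K_def by (auto intro: rtrancl_into_rtrancl)
  have path_in_K: "(x, y) \<in> (edges H \<inter> K \<times> K)\<^sup>*" if "(x, y) \<in> ?E\<^sup>*" for y
    using that
  proof (induction y rule: rtrancl_induct)
    case (step w y)
    then have "(w, y) \<in> edges H \<inter> K \<times> K" unfolding K_def by (auto intro: rtrancl_into_rtrancl)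
    with step.IH show ?case by (rule rtrancl_into_rtrancl)
  qed simp
  have "sym (edges H \<inter> K \<times> K)" using assms(1) unfolding sym_def by blast
  then have "sym ((edges H \<inter> K \<times> K)\<^sup>*)" by (rule sym_rtrancl)
  show "connected_set H K"
    unfolding connected_set_def
  proof (intro ballI)
    fix a b assume "a \<in> K" "b \<in> K"
    then have "(a, x) \<in> (edges H \<inter> K \<times> K)\<^sup>*" "(x, b) \<in> (edges H \<inter> K \<times> K)\<^sup>*"
      using path_in_K \<open>sym ((edges H \<inter> K \<times> K)\<^sup>*)\<close> unfolding K_def by (auto dest: symD)
    then show "(a, b) \<in> (edges H \<inter> K \<times> K)\<^sup>*" by (rule rtrancl_trans)
  qed
qed

lemma balanced_separation_or_big_component:
  assumes "is_graph H" "S \<subseteq> verts H"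
  shows "(\<exists>A B. balanced_separation H A B \<and> A \<inter> B = S) \<or>
    (\<exists>K \<subseteq> verts H - S. connected_set H K \<and> 2 * real (card (verts H)) / 3 < real (card K))"
proof (rule ccontr)
  assume "\<not> ?thesis"
  then have no_sep: "\<nexists>A B. balanced_separation H A B \<and> A \<inter> B = S"
    and no_big: "\<And>K. K \<subseteq> verts H - S \<Longrightarrow> connected_set H K \<Longrightarrow> real (card K) \<le> 2 * real (card (verts H)) / 3"
    by (auto simp: not_less)
  let ?n = "real (card (verts H))" and ?R = "verts H - S"
  have fin: "finite (verts H)" and "sym (edges H)" using assms(1) unfolding is_graph_def by auto
  have not_middle: "real (card Y) < ?n / 3 \<or> 2 * ?n / 3 < real (card Y)" if "edge_closed H ?R Y" for Y
    using balanced_separation_of_edge_closed_middle[OF that assms(2) fin] no_sep by force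
  \<comment> \<open>a largest union of components of H - S with at most a third of the vertices\<close>
  let ?small = "\<lambda>Y. edge_closed H ?R Y \<and> real (card Y) \<le> ?n / 3"
  have "?small {}" unfolding edge_closed_def by simp
  moreover have "\<forall>Y. ?small Y \<longrightarrow> card Y < card (verts H) + 1"
    using fin unfolding edge_closed_def by (auto simp: less_Suc_eq_le intro: card_mono)
  ultimately obtain Y where Y: "?small Y" and Y_max: "\<And>Z. ?small Z \<Longrightarrow> card Z \<le> card Y"
    using ex_has_greatest_nat[of ?small "{}" card "card (verts H) + 1"] by blast
  then have "Y \<subseteq> ?R" unfolding edge_closed_def by blast
  show False
  proof (cases "Y = ?R")
    case True
    then show False
      using balanced_separation_of_edge_closed[of H S Y] Y assms(2) no_sep by simp
  next
    case False
    then obtain x where "x \<in> ?R" "x \<notin> Y" using \<open>Y \<subseteq> ?R\<close> by auto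
    obtain K where "x \<in> K" "edge_closed H ?R K" "connected_set H K"
      by (rule obtain_component[OF \<open>sym (edges H)\<close> \<open>x \<in> ?R\<close>])
    then have "K \<subseteq> ?R" "finite K" "finite Y" "edge_closed H ?R (Y \<union> K)"
      using Y fin \<open>Y \<subseteq> ?R\<close> unfolding edge_closed_def by (auto intro: finite_subset)
    have "card Y < card (Y \<union> K)"
      using \<open>x \<in> K\<close> \<open>x \<notin> Y\<close> \<open>finite K\<close> \<open>finite Y\<close> by (intro psubset_card_mono) auto
    then have "?n / 3 < real (card (Y \<union> K))"
      using Y_max \<open>edge_closed H ?R (Y \<union> K)\<close> by (meson not_le)
    then have "2 * ?n / 3 < real (card (Y \<union> K))" using not_middle[OF \<open>edge_closed H ?R (Y \<union> K)\<close>] by linarith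
    moreover have "card (Y \<union> K) \<le> card Y + card K" by (rule card_Un_le)
    ultimately have "?n / 3 < real (card K)" using Y by linarith
    then have "2 * ?n / 3 < real (card K)" using not_middle[OF \<open>edge_closed H ?R K\<close>] by linarith
    then show False using no_big[OF \<open>K \<subseteq> ?R\<close> \<open>connected_set H K\<close>] by linarith
  qed
qed

lemma card_lt_add_imp_Int_nonempty:
  assumes "finite V" "A \<subseteq> V" "B \<subseteq> V" "card V < card A + card B"
  shows "A \<inter> B \<noteq> {}"
proof
  assume "A \<inter> B = {}"
  then have "card A + card B = card (A \<union> B)"
    using assms(1-3) by (simp add: card_Un_disjoint finite_subset)
  also have "\<dots> \<le> card V" using assms(1-3) by (simp add: card_mono)
  finally show False using assms(4) by simp
qed

lemma tree_decomp_bag_separation: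
  assumes "is_graph H" and TD: "tree_decomp H I F X"
  shows "\<exists>t\<in>I. \<exists>A B. balanced_separation H A B \<and> A \<inter> B = X t"
proof (rule ccontr)
  assume no_bag: "\<not> ?thesis"
  let ?n = "real (card (verts H))"
  have fin: "finite (verts H)" using assms(1) unfolding is_graph_def by auto
  have T: "is_tree I F" and bags: "\<forall>t\<in>I. X t \<subseteq> verts H" and cover: "\<forall>v\<in>verts H. \<exists>t\<in>I. v \<in> X t"
    using TD unfolding tree_decomp_def by blast+
  have big: "\<exists>K. K \<subseteq> verts H - X t \<and> connected_set H K \<and> 2 * ?n / 3 < real (card K)"
    if "t \<in> I" for t
  proof -
    have "\<nexists>A B. balanced_separation H A B \<and> A \<inter> B = X t" using no_bag that by simp
    then show ?thesis using balanced_separation_or_big_component[OF assms(1) bags[rule_format, OF that]] by metis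
  qed
  define K where "K t = (SOME K. K \<subseteq> verts H - X t \<and> connected_set H K \<and> 2 * ?n / 3 < real (card K))"
    for t
  have K: "K t \<subseteq> verts H - X t \<and> connected_set H (K t) \<and> 2 * ?n / 3 < real (card (K t))"
    if "t \<in> I" for t
    unfolding K_def by (rule someI_ex[OF big[OF that]])
  let ?meets = "\<lambda>t. {s\<in>I. X s \<inter> K t \<noteq> {}}"
  have meets_subtree: "?meets t \<subseteq> I \<and> ?meets t \<noteq> {} \<and> connected_on (?meets t) F" if "t \<in> I" for t
  proof -
    have "0 < real (card (K t))" using K[OF that] of_nat_0_le_iff[of "card (verts H)"] by linarith
    then have "K t \<noteq> {}" by auto
    then have "?meets t \<noteq> {}" using K[OF that] cover by blast
    moreover have "connected_on (?meets t) F" using connected_on_bags_meeting[OF TD] K[OF that] by blast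
    ultimately show ?thesis by blast
  qed
  have meets_pairwise: "?meets t1 \<inter> ?meets t2 \<noteq> {}" if "t1 \<in> I" "t2 \<in> I" for t1 t2
  proof -
    have "real (card (verts H)) < real (card (K t1) + card (K t2))"
      unfolding of_nat_add using K[OF that(1)] K[OF that(2)] by linarith
    then have "K t1 \<inter> K t2 \<noteq> {}"
      using card_lt_add_imp_Int_nonempty[OF fin] K that unfolding of_nat_less_iff by blast
    then show ?thesis using K that cover by blast
  qed
  obtain u where "u \<in> I" "\<forall>t\<in>I. u \<in> ?meets t"
    using subtree_helly[where J = I and S = ?meets, OF T meets_subtree meets_pairwise] by blast
  then have "X u \<inter> K u \<noteq> {}" by blast
  then show False using K[OF \<open>u \<in> I\<close>] by blast
qed

section \<open>Independence number and separators\<close>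

lemma finite_independent_cards:
  assumes "finite (verts G)"
  shows "finite {card A | A. independent G A}"
proof (rule finite_subset)
  show "{card A | A. independent G A} \<subseteq> {..card (verts G)}"
    using assms unfolding independent_def by (auto intro: card_mono)
qed simp

lemma card_le_alpha:
  assumes "finite (verts G)" "independent G A"
  shows "card A \<le> alpha G"
  unfolding alpha_def using finite_independent_cards[OF assms(1)] assms(2) by (intro Max_ge) blast+

lemma alpha_attained:
  assumes "finite (verts G)"
  obtains A where "independent G A" "card A = alpha G"
proof -
  have "independent G {}" unfolding independent_def by simp
  then have "alpha G \<in> {card A | A. independent G A}"
    unfolding alpha_def using finite_independent_cards[OF assms] by (intro Max_in) blast+
  then show thesis using that by force
qed

lemma alpha_le_card:
  assumes "finite (verts G)"
  shows "alpha G \<le> card (verts G)"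
proof -
  obtain A where "independent G A" "card A = alpha G" using alpha_attained[OF assms] .
  then show ?thesis using assms unfolding independent_def by (metis card_mono)
qed

lemma induced_induced: "induced (induced G C) S = induced G (C \<inter> S)"
  unfolding induced_def verts_def edges_def by auto

lemma alpha_induced_Un_le:
  assumes "finite (verts G)"
  shows "alpha (induced G (S \<union> T)) \<le> alpha (induced G S) + card (verts G \<inter> T)"
proof -
  have fin: "finite (verts (induced G U))" for U using assms unfolding induced_def verts_def by simp
  obtain A where A: "independent (induced G (S \<union> T)) A" "card A = alpha (induced G (S \<union> T))"
    using alpha_attained[OF fin] .
  then have "A \<subseteq> verts G \<inter> (S \<union> T)" unfolding independent_def induced_def verts_def by simp
  have "independent (induced G S) (A \<inter> S)"
    using A(1) unfolding independent_def induced_def verts_def edges_def by auto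
  then have "card (A \<inter> S) \<le> alpha (induced G S)" by (rule card_le_alpha[OF fin])
  moreover have "card (A - S) \<le> card (verts G \<inter> T)"
    using \<open>A \<subseteq> verts G \<inter> (S \<union> T)\<close> assms by (intro card_mono) auto
  moreover have "card A = card (A \<inter> S) + card (A - S)"
    using \<open>A \<subseteq> verts G \<inter> (S \<union> T)\<close> assms by (metis card_Int_Diff finite_Int finite_subset)
  ultimately show ?thesis using A(2) by linarith
qed

lemma s_alpha_le:
  assumes "balanced_separation G A B"
  shows "s_alpha G \<le> alpha (induced G (A \<inter> B))"
  unfolding s_alpha_def by (rule cInf_lower) (use assms in blast)+

lemma balanced_separation_trivial: "balanced_separation G (verts G) (verts G)"
  unfolding balanced_separation_def separation_def by simp

lemma s_alpha_attained:
  obtains A B where "balanced_separation G A B" "s_alpha G = alpha (induced G (A \<inter> B))"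
proof -
  have "s_alpha G \<in> {alpha (induced G (A \<inter> B)) | A B. balanced_separation G A B}"
    unfolding s_alpha_def using balanced_separation_trivial by (intro Inf_nat_def1) blast
  then show thesis using that by blast
qed

lemma s_alpha_le_card:
  assumes "finite (verts G)"
  shows "s_alpha G \<le> card (verts G)"
proof -
  have "s_alpha G \<le> alpha (induced G (verts G))"
    using s_alpha_le[OF balanced_separation_trivial] by simp
  also have "\<dots> \<le> card (verts (induced G (verts G)))"
    using assms by (intro alpha_le_card) (simp add: induced_def verts_def)
  also have "\<dots> = card (verts G)" by (simp add: induced_def verts_def)
  finally show ?thesis .
qed

lemma is_graph_induced: "is_graph G \<Longrightarrow> is_graph (induced G C)"
  unfolding is_graph_def induced_def verts_def edges_def sym_def irrefl_def by auto

lemma tree_decomp_trivial: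
  assumes "is_graph H"
  shows "tree_decomp H {0} {} (\<lambda>_. verts H)"
proof -
  have "{{s, t} | s t. (s, t) \<in> ({} :: (nat \<times> nat) set)} = {}" by blast
  then have "is_tree {0} {}" unfolding is_tree_def connected_on_def by simp
  then show ?thesis
    using assms unfolding tree_decomp_def is_graph_def connected_on_def by auto
qed

lemma tree_alpha_attained:
  assumes "is_graph H"
  obtains I F X where "tree_decomp H I F X" "tree_alpha H = Max ((\<lambda>t. alpha (induced H (X t))) ` I)"
proof -
  let ?widths = "{Max ((\<lambda>t. alpha (induced H (X t))) ` I) | I F X. tree_decomp H I F X}"
  have "?widths \<noteq> {}" using tree_decomp_trivial[OF assms] by blast
  then have "tree_alpha H \<in> ?widths" unfolding tree_alpha_def by (rule Inf_nat_def1)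
  then show thesis using that by blast
qed

lemma s_alpha_le_tree_alpha:
  assumes "is_graph H"
  shows "s_alpha H \<le> tree_alpha H"
proof -
  obtain I F X where TD: "tree_decomp H I F X"
    and width: "tree_alpha H = Max ((\<lambda>t. alpha (induced H (X t))) ` I)"
    using tree_alpha_attained[OF assms] .
  obtain t A B where "t \<in> I" "balanced_separation H A B" "A \<inter> B = X t"
    using tree_decomp_bag_separation[OF assms TD] by blast
  then have "s_alpha H \<le> alpha (induced H (X t))" using s_alpha_le by metis
  also have "\<dots> \<le> tree_alpha H"
    unfolding width using TD \<open>t \<in> I\<close> unfolding tree_decomp_def is_tree_def by (intro Max_ge) auto
  finally show ?thesis .
qed

lemma balanced_separation_extend:
  assumes "balanced_separation (induced G C) A B" "finite (verts G)"
  shows "balanced_separation G (A \<union> (verts G - C)) (B \<union> (verts G - C))"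
proof -
  let ?D = "verts G - C"
  have AB: "A \<union> B = verts G \<inter> C" and no_edge: "\<forall>u\<in>A - B. \<forall>v\<in>B - A. (u, v) \<notin> edges G \<inter> C \<times> C"
    and small: "real (card (A - B)) \<le> 2 * real (card (verts G \<inter> C)) / 3"
      "real (card (B - A)) \<le> 2 * real (card (verts G \<inter> C)) / 3"
    using assms(1) unfolding balanced_separation_def separation_def induced_def verts_def edges_def
    by auto
  have diff: "(A \<union> ?D) - (B \<union> ?D) = A - B" "(B \<union> ?D) - (A \<union> ?D) = B - A" using AB by blast+
  have "separation G (A \<union> ?D) (B \<union> ?D)"
    unfolding separation_def diff using AB no_edge by blast
  moreover have "real (card (verts G \<inter> C)) \<le> real (card (verts G))"
    using assms(2) by (simp add: card_mono)
  ultimately show ?thesis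
    unfolding balanced_separation_def diff using small by linarith
qed

lemma s_alpha_le_s_alpha_induced:
  assumes "finite (verts G)"
  shows "s_alpha G \<le> s_alpha (induced G C) + card (verts G - C)"
proof -
  let ?D = "verts G - C"
  obtain A B where sep: "balanced_separation (induced G C) A B"
    and opt: "s_alpha (induced G C) = alpha (induced (induced G C) (A \<inter> B))"
    using s_alpha_attained .
  have "A \<inter> B \<subseteq> C"
    using sep unfolding balanced_separation_def separation_def induced_def verts_def by auto
  have "s_alpha G \<le> alpha (induced G ((A \<union> ?D) \<inter> (B \<union> ?D)))"
    using s_alpha_le[OF balanced_separation_extend[OF sep assms]] .
  also have "(A \<union> ?D) \<inter> (B \<union> ?D) = (A \<inter> B) \<union> ?D" by blast
  also have "alpha (induced G ((A \<inter> B) \<union> ?D)) \<le> alpha (induced G (A \<inter> B)) + card (verts G \<inter> ?D)"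
    using alpha_induced_Un_le[OF assms] .
  also have "induced G (A \<inter> B) = induced (induced G C) (A \<inter> B)"
    using \<open>A \<inter> B \<subseteq> C\<close> by (simp add: induced_induced Int_absorb1)
  also have "verts G \<inter> ?D = ?D" by blast
  finally show ?thesis using opt by simp
qed

lemma sum_mset_card_Int:
  assumes "finite V"
  shows "(\<Sum>C\<in>#\<C>. card (V \<inter> C)) = (\<Sum>v\<in>V. size (filter_mset (\<lambda>C. v \<in> C) \<C>))"
proof (induction \<C>)
  case (add C \<C>)
  have "(\<Sum>v\<in>V. size (filter_mset (\<lambda>C'. v \<in> C') (add_mset C \<C>)))
      = (\<Sum>v\<in>V. (if v \<in> C then 1 else 0) + size (filter_mset (\<lambda>C'. v \<in> C') \<C>))"
    by (intro sum.cong) auto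
  also have "\<dots> = card (V \<inter> C) + (\<Sum>v\<in>V. size (filter_mset (\<lambda>C'. v \<in> C') \<C>))"
    using assms by (simp add: sum.distrib sum.If_cases Int_def)
  finally show ?case using add.IH by simp
qed simp

lemma general_cover_large_member:
  assumes "finite (verts G)" "general_cover G \<beta> \<C>"
  obtains C where "C \<in># \<C>" "\<beta> * real (card (verts G)) \<le> real (card (verts G \<inter> C))"
proof -
  let ?V = "verts G" and ?m = "Max ((\<lambda>C. card (verts G \<inter> C)) ` set_mset \<C>)"
  have "\<C> \<noteq> {#}" and deg: "\<forall>v\<in>?V. \<beta> * real (size \<C>) \<le> real (size (filter_mset (\<lambda>C. v \<in> C) \<C>))"
    using assms(2) unfolding general_cover_def by auto
  then obtain C where "C \<in># \<C>" "card (?V \<inter> C) = ?m"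
    by (metis (no_types, lifting) Max_in empty_iff finite_imageI finite_set_mset image_iff
        image_is_empty set_mset_eq_empty_iff)
  \<comment> \<open>double counting: the largest member is at least as large as the average one\<close>
  have "real (card ?V) * (\<beta> * real (size \<C>)) \<le> (\<Sum>v\<in>?V. real (size (filter_mset (\<lambda>C. v \<in> C) \<C>)))"
    using sum_mono[OF bspec[OF deg]] by simp
  also have "\<dots> = real (\<Sum>C\<in>#\<C>. card (?V \<inter> C))" using sum_mset_card_Int[OF assms(1)] by simp
  also have "\<dots> \<le> real (size \<C> * ?m)"
    unfolding of_nat_le_iff using sum_mset_mono[of \<C> "\<lambda>C. card (?V \<inter> C)" "\<lambda>_. ?m"] by simp
  finally have "real (size \<C>) * (\<beta> * real (card ?V)) \<le> real (size \<C>) * real ?m"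
    by (simp add: algebra_simps)
  moreover have "0 < real (size \<C>)" using \<open>\<C> \<noteq> {#}\<close> by (simp add: nonempty_has_size)
  ultimately have "\<beta> * real (card ?V) \<le> real ?m" by (rule mult_left_le_imp_le)
  then show thesis using that \<open>C \<in># \<C>\<close> \<open>card (?V \<inter> C) = ?m\<close> by simp
qed

lemma s_alpha_le_general_cover:
  assumes "is_graph G" "general_cover G \<beta> \<C>" "\<forall>C\<in>#\<C>. tree_alpha (induced G C) \<le> w"
  shows "real (s_alpha G) \<le> real w + (1 - \<beta>) * real (card (verts G))"
proof -
  let ?V = "verts G"
  have fin: "finite ?V" using assms(1) unfolding is_graph_def by blast
  obtain C where "C \<in># \<C>" and large: "\<beta> * real (card ?V) \<le> real (card (?V \<inter> C))"
    using general_cover_large_member[OF fin assms(2)] .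
  have "s_alpha G \<le> s_alpha (induced G C) + card (?V - C)"
    using s_alpha_le_s_alpha_induced[OF fin] .
  also have "s_alpha (induced G C) \<le> tree_alpha (induced G C)"
    by (rule s_alpha_le_tree_alpha[OF is_graph_induced[OF assms(1)]])
  also have "\<dots> \<le> w" using assms(3) \<open>C \<in># \<C>\<close> by blast
  finally have "real (s_alpha G) \<le> real w + real (card (?V - C))" by simp
  moreover have "card (?V - C) + card (?V \<inter> C) = card ?V"
    using fin by (metis Diff_Diff_Int card_Diff_subset_Int add.commute card_Int_Diff inf_commute)
  ultimately show ?thesis using large by (simp add: algebra_simps)
qed

lemma frac_tree_alpha_fragile_s_alpha_small:
  assumes graphs: "\<forall>G\<in>\<G>. is_graph G" and frag: "frac_tree_alpha_fragile \<G>" and "1 \<le> c"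
  shows "\<exists>k::nat. \<forall>G\<in>\<G>. card (verts G) \<ge> k \<longrightarrow> real (s_alpha G) < real (card (verts G)) / real c"
proof -
  obtain f :: "nat \<Rightarrow> nat" where f: "\<And>r G. 1 \<le> r \<Longrightarrow> G \<in> \<G> \<Longrightarrow>
      \<exists>\<C>. general_cover G (1 - 1 / real r) \<C> \<and> (\<forall>C\<in>#\<C>. tree_alpha (induced G C) \<le> f r)"
    using frag unfolding frac_tree_alpha_fragile_def by blast
  \<comment> \<open>the at most n/r uncovered vertices and the width f r < n/r each cost half of n/c\<close>
  define r where "r = 2 * c"
  have "1 \<le> r" using \<open>1 \<le> c\<close> unfolding r_def by simp
  show ?thesis
  proof (intro exI ballI impI)
    fix G assume "G \<in> \<G>" and large: "r * f r + 1 \<le> card (verts G)"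
    let ?n = "real (card (verts G))"
    obtain \<C> where "general_cover G (1 - 1 / real r) \<C>" "\<forall>C\<in>#\<C>. tree_alpha (induced G C) \<le> f r"
      using f[OF \<open>1 \<le> r\<close> \<open>G \<in> \<G>\<close>] by blast
    then have "real (s_alpha G) \<le> real (f r) + ?n / real r"
      using s_alpha_le_general_cover graphs \<open>G \<in> \<G>\<close> by fastforce
    moreover have "real (f r) < ?n / real r"
    proof -
      have "real (r * f r) < ?n" unfolding of_nat_less_iff using large by linarith
      then show ?thesis using \<open>1 \<le> r\<close> by (simp add: pos_less_divide_eq mult.commute)
    qed
    moreover have "?n / real c = 2 * (?n / real r)" unfolding r_def by simp
    ultimately show "real (s_alpha G) < ?n / real c" by linarith
  qed
qed

lemma s_alpha_class_le:
  assumes graphs: "\<forall>G\<in>\<G>. is_graph G"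
    and small: "\<forall>G\<in>\<G>. card (verts G) \<ge> k \<longrightarrow> real (s_alpha G) < real (card (verts G)) / real c"
  shows "real (s_alpha_class \<G> n) \<le> real k + real n / real c"
proof -
  let ?S = "{s_alpha G | G. G \<in> \<G> \<and> card (verts G) \<le> n}"
  have bound: "real (s_alpha G) \<le> real k + real n / real c" if "G \<in> \<G>" "card (verts G) \<le> n" for G
  proof (cases "k \<le> card (verts G)")
    case True
    then have "real (s_alpha G) < real (card (verts G)) / real c" using small that(1) by blast
    also have "\<dots> \<le> real n / real c" using that(2) by (simp add: divide_right_mono)
    finally show ?thesis by simp
  next
    case False
    moreover have "s_alpha G \<le> card (verts G)"
      using s_alpha_le_card graphs that(1) unfolding is_graph_def by blast
    ultimately show ?thesis by (simp add: add_increasing2)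
  qed
  show ?thesis
  proof (cases "?S = {}")
    case True
    then have "s_alpha_class \<G> n = 0" unfolding s_alpha_class_def by (simp only: Sup_nat_empty)
    then show ?thesis by simp
  next
    case False
    have "?S \<subseteq> {..n}"
    proof
      fix x assume "x \<in> ?S"
      then obtain G where "x = s_alpha G" "G \<in> \<G>" "card (verts G) \<le> n" by blast
      moreover have "s_alpha G \<le> card (verts G)"
        using s_alpha_le_card graphs \<open>G \<in> \<G>\<close> unfolding is_graph_def by blast
      ultimately show "x \<in> {..n}" by simp
    qed
    then have "finite ?S" by (rule finite_subset) simp
    then have "s_alpha_class \<G> n \<in> ?S"
      unfolding s_alpha_class_def cSup_eq_Max[OF \<open>finite ?S\<close> False] by (rule Max_in[OF _ False])
    then obtain G where "s_alpha_class \<G> n = s_alpha G" "G \<in> \<G>" "card (verts G) \<le> n" by blast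
    then show ?thesis using bound by simp
  qed
qed

lemma sublinear_sep_alpha_if_s_alpha_small:
  assumes graphs: "\<forall>G\<in>\<G>. is_graph G"
    and small: "\<forall>c::nat. c \<ge> 1 \<longrightarrow> (\<exists>k::nat. \<forall>G\<in>\<G>. card (verts G) \<ge> k \<longrightarrow>
      real (s_alpha G) < real (card (verts G)) / real c)"
  shows "sublinear_sep_alpha \<G>"
  unfolding sublinear_sep_alpha_def
proof (rule LIMSEQ_I)
  fix e :: real assume "0 < e"
  obtain c :: nat where "2 / e < real c" using reals_Archimedean2 by blast
  moreover have "0 < 2 / e" using \<open>0 < e\<close> by simp
  ultimately have "0 < real c" by linarith
  then have "1 \<le> c" by simp
  have "2 < e * real c" using \<open>2 / e < real c\<close> \<open>0 < e\<close> by (simp add: field_simps)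
  then have "1 / real c < e / 2" using \<open>0 < real c\<close> by (simp add: field_simps)
  obtain k where k: "\<forall>G\<in>\<G>. card (verts G) \<ge> k \<longrightarrow> real (s_alpha G) < real (card (verts G)) / real c"
    using small \<open>1 \<le> c\<close> by blast
  obtain N :: nat where "2 * real k / e < real N" using reals_Archimedean2 by blast
  show "\<exists>N. \<forall>n\<ge>N. norm (real (s_alpha_class \<G> n) / real n - 0) < e"
  proof (intro exI[of _ "N + 1"] allI impI)
    fix n assume "N + 1 \<le> n"
    then have "0 < real n" "real N < real n" by simp_all
    have "2 * real k < e * real N" using \<open>2 * real k / e < real N\<close> \<open>0 < e\<close> by (simp add: field_simps)
    also have "\<dots> < e * real n" using \<open>real N < real n\<close> \<open>0 < e\<close> by simp
    finally have "real k / real n < e / 2" using \<open>0 < real n\<close> by (simp add: field_simps)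
    have "real (s_alpha_class \<G> n) / real n \<le> (real k + real n / real c) / real n"
      using s_alpha_class_le[OF graphs k] \<open>0 < real n\<close> by (simp add: divide_right_mono)
    also have "\<dots> = real k / real n + 1 / real c" using \<open>0 < real n\<close> by (simp add: field_simps)
    finally have "real (s_alpha_class \<G> n) / real n < e"
      using \<open>real k / real n < e / 2\<close> \<open>1 / real c < e / 2\<close> by linarith
    then show "norm (real (s_alpha_class \<G> n) / real n - 0) < e" by simp
  qed
qed

theorem lemma5p4:
  fixes \<G> :: "'a graph set"
  assumes graphs: "\<forall>G\<in>\<G>. is_graph G"
    and frag: "frac_tree_alpha_fragile \<G>"
  shows "(\<forall>c::nat. c \<ge> 1 \<longrightarrow> (\<exists>k::nat. \<forall>G\<in>\<G>. card (verts G) \<ge> k \<longrightarrow>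
            real (s_alpha G) < real (card (verts G)) / real c))
         \<and> sublinear_sep_alpha \<G>"
proof -
  have small: "\<forall>c::nat. c \<ge> 1 \<longrightarrow> (\<exists>k::nat. \<forall>G\<in>\<G>. card (verts G) \<ge> k \<longrightarrow>
      real (s_alpha G) < real (card (verts G)) / real c)"
    using frac_tree_alpha_fragile_s_alpha_small[OF graphs frag] by blast
  then show ?thesis using sublinear_sep_alpha_if_s_alpha_small[OF graphs] by blast
qed

end
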